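(* Let $G_n$, $T$ and $\gamma$ be as in the context, and let $C$ be a directed cycle in $T$, with $|C|$ its number of arcs. Then $|C|$ divides $n+1$. Moreover, for every vertex $u$ of $C$, $u\gamma(u)=l(C)^{\frac{n+1}{|C|}}$, where $l(C)$ is the label of $C$ traversed as a closed walk starting at the out-neighbour of $u$ in $C$ (so that its last arc is the arc of $C$ leaving $u$), and $l(C)^j$ denotes the concatenation of $j$ copies of $l(C)$.
   Context: Let $A$ be a finite alphabet with a linear order $<$, extended to the lexicographic order on words. Let $\mathcal{F}$ be a set of words over $A$ (forbidden words). A word $w$ is in the language if the bi-infinite periodic sequence $\cdots www\cdots$ contains no element of $\mathcal{F}$ as a factor; $W_k$ denotes the set of words of length $k$ in the language. Fix $n\geq 1$ and consider the digraph with vertex set $A^n$ and arcs $(as,sb)$ for $a,b\in A$, $s\in A^{n-1}$, $asb\in W_{n+1}$, the label of $(as,sb)$ being $b$. The de Bruijn graph of span $n$, $G_n$, is a strongly connected component of maximum size of this digraph; vertices are identified with their words (so $u\gamma(u)$ is a word of length $n+1$). The label of a walk is the concatenation of the labels of its arcs. Let $m$ be the vertex of $G_n$ whose word is lexicographically largest. For each vertex $v$, let $e(v)$ be the arc of $G_n$ with tail $v$ having maximum label, and let $\gamma(v)$ be the label of $e(v)$. $T$ is the spanning subgraph of $G_n$ with arc set $\{e(v): v\in V(G_n), v\neq m\}$. *)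

theory Defs
  imports Main "HOL-Library.List_Lexorder"
begin

text \<open>Words are lists over a finite linearly ordered alphabet 'a; the order on
  lists is the lexicographic order from HOL-Library.List_Lexorder.\<close>

text \<open>f is a factor of the bi-infinite periodic sequence ... w w w ... (w nonempty).\<close>
definition periodic_factor :: "'a list \<Rightarrow> 'a list \<Rightarrow> bool" where
  "periodic_factor f w \<longleftrightarrow>
     (\<exists>i. f = map (\<lambda>j. w ! ((i + j) mod length w)) [0..<length f])"

definition in_lang :: "'a list set \<Rightarrow> 'a list \<Rightarrow> bool" where
  "in_lang F w \<longleftrightarrow> w \<noteq> [] \<and> (\<forall>f\<in>F. \<not> periodic_factor f w)"

definition W :: "'a list set \<Rightarrow> nat \<Rightarrow> 'a list set" where
  "W F k = {w. length w = k \<and> in_lang F w}"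

text \<open>Arcs of the full digraph on A^n: (as, sb) with asb in W_(n+1); label b = last of target.\<close>
definition garc :: "'a list set \<Rightarrow> nat \<Rightarrow> 'a list \<Rightarrow> 'a list \<Rightarrow> bool" where
  "garc F n u v \<longleftrightarrow> length u = n \<and> (\<exists>b. v = tl u @ [b] \<and> u @ [b] \<in> W F (n + 1))"

definition is_scc :: "'a list set \<Rightarrow> nat \<Rightarrow> 'a list set \<Rightarrow> bool" where
  "is_scc F n V \<longleftrightarrow> (\<exists>u. length u = n \<and>
     V = {v. length v = n \<and> (garc F n)\<^sup>*\<^sup>* u v \<and> (garc F n)\<^sup>*\<^sup>* v u})"

definition is_deBruijn :: "'a list set \<Rightarrow> nat \<Rightarrow> 'a list set \<Rightarrow> bool" where
  "is_deBruijn F n V \<longleftrightarrow> is_scc F n V \<and> (\<forall>V'. is_scc F n V' \<longrightarrow> card V' \<le> card V)"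

definition Garc :: "'a list set \<Rightarrow> nat \<Rightarrow> 'a list set \<Rightarrow> 'a list \<Rightarrow> 'a list \<Rightarrow> bool" where
  "Garc F n V u v \<longleftrightarrow> u \<in> V \<and> v \<in> V \<and> garc F n u v"

definition gamma :: "'a list set \<Rightarrow> nat \<Rightarrow> 'a list set \<Rightarrow> 'a::linorder list \<Rightarrow> 'a" where
  "gamma F n V u = Max {b. Garc F n V u (tl u @ [b])}"

definition Tarc :: "'a list set \<Rightarrow> nat \<Rightarrow> 'a list set \<Rightarrow> 'a::linorder list \<Rightarrow> 'a list \<Rightarrow> bool" where
  "Tarc F n V u v \<longleftrightarrow> u \<in> V \<and> u \<noteq> Max V \<and> Garc F n V u v \<and> last v = gamma F n V u"

definition is_cycle :: "('b \<Rightarrow> 'b \<Rightarrow> bool) \<Rightarrow> 'b list \<Rightarrow> bool" where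
  "is_cycle R cs \<longleftrightarrow> cs \<noteq> [] \<and> distinct cs \<and>
     (\<forall>i<length cs. R (cs ! i) (cs ! ((i + 1) mod length cs)))"

end

theory Submission
  imports Defs
begin

text \<open>Write the cycle as a k-periodic vertex sequence c and let l i = last (c i) be the label
  of the arc entering c i. Each arc shifts the window by one letter, so c (i + n) is the word
  l (i+1) ... l (i+n). Rotating the word c t l(t+1) of W(n+1) by two letters shows that
  tl (c (t+1)) @ [hd (c t)] is an out-neighbour of c (t+1) in the same strongly connected
  component, whence hd (c t) \<le> \<gamma>(c (t+1)) = l (t+2), i.e. l s \<le> l (s+n+1). A sequence that
  is periodic and non-decreasing along steps of n+1 is invariant under them, so l, and with
  it c, has period n+1; distinctness of the cycle then gives |C| dvd n+1, and c i \<gamma>(c i)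
  is the word l (i+2) ... l (i+n+2) of n+1 consecutive labels of a k-periodic sequence.\<close>

lemma periodic_factor_rotate1:
  assumes "periodic_factor f (rotate1 x)" "x \<noteq> []"
  shows "periodic_factor f x"
proof -
  obtain i where i: "f = map (\<lambda>j. rotate1 x ! ((i + j) mod length (rotate1 x))) [0..<length f]"
    using assms(1) unfolding periodic_factor_def by blast
  have "rotate1 x ! ((i + j) mod length x) = x ! ((Suc i + j) mod length x)" for j
    using assms(2) by (simp add: nth_rotate1 mod_Suc_eq)
  with i have "f = map (\<lambda>j. x ! ((Suc i + j) mod length x)) [0..<length f]"
    by simp
  then show ?thesis unfolding periodic_factor_def by blast
qed

lemma W_rotate: "x \<in> W F L \<Longrightarrow> rotate p x \<in> W F L"
proof (induction p)
  case (Suc p)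
  then show ?case
    unfolding W_def in_lang_def by (fastforce dest: periodic_factor_rotate1)
qed simp

lemma garc_take_rotate1:
  assumes "x \<in> W F (Suc n)" "n \<ge> 1"
  shows "garc F n (take n x) (take n (rotate1 x))"
proof -
  have len: "length x = Suc n" using assms(1) unfolding W_def by simp
  then obtain a w where x: "x = a # w" by (cases x) auto
  have "w \<noteq> []" using len assms(2) x by auto
  then have w: "w = butlast w @ [last w]" by simp
  have "take n x = a # butlast w" "take n (rotate1 x) = w"
    using len x assms(2) by (simp_all add: butlast_conv_take take_Cons')
  moreover have "(a # butlast w) @ [last w] = x" "tl (a # butlast w) @ [last w] = w"
    using x w by simp_all
  ultimately show ?thesis
    using assms len x unfolding garc_def by (intro conjI exI[of _ "last w"]) auto
qed

lemma rtranclp_garc_take_rotate: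
  assumes "x \<in> W F (Suc n)" "n \<ge> 1"
  shows "(garc F n)\<^sup>*\<^sup>* (take n (rotate p x)) (take n (rotate q x))"
proof -
  have reach: "(garc F n)\<^sup>*\<^sup>* (take n (rotate p x)) (take n (rotate (p + d) x))" for d
  proof (induction d)
    case (Suc d)
    have "garc F n (take n (rotate (p + d) x)) (take n (rotate (p + Suc d) x))"
      using garc_take_rotate1[OF W_rotate[OF assms(1)] assms(2), of "p + d"] by simp
    with Suc show ?case by (rule rtranclp.rtrancl_into_rtrancl)
  qed simp
  have "length x = Suc n" using assms(1) unfolding W_def by simp
  then have "rotate (p + (q + p * n)) x = rotate (q + p * length x) x" by (simp add: algebra_simps)
  also have "\<dots> = rotate q x"
    by (subst (1 2) rotate_conv_mod) simp
  finally show ?thesis using reach[of "q + p * n"] by simp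
qed

lemma take_rotate_in_scc:
  assumes "is_scc F n V" "x \<in> W F (Suc n)" "n \<ge> 1" "take n x \<in> V"
  shows "take n (rotate p x) \<in> V"
proof -
  obtain u where V: "V = {v. length v = n \<and> (garc F n)\<^sup>*\<^sup>* u v \<and> (garc F n)\<^sup>*\<^sup>* v u}"
    using assms(1) unfolding is_scc_def by blast
  have "length x = Suc n" using assms(2) unfolding W_def by simp
  then show ?thesis
    using assms(4) rtranclp_garc_take_rotate[OF assms(2,3), of 0 p]
      rtranclp_garc_take_rotate[OF assms(2,3), of p 0]
    unfolding V by (auto intro: rtranclp_trans)
qed

lemma hd_le_gamma:
  fixes F :: "('a::{finite,linorder}) list set"
  assumes "is_scc F n V" "n \<ge> 1" "Garc F n V u v"
  shows "hd u \<le> gamma F n V v"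
proof -
  obtain b where v: "v = tl u @ [b]" and x: "u @ [b] \<in> W F (Suc n)"
    and u: "u \<in> V" "length u = n" and "v \<in> V"
    using assms(3) unfolding Garc_def garc_def by auto
  have "u \<noteq> []" using u assms(2) by auto
  then have rot1: "rotate1 (u @ [b]) = v @ [hd u]" using v by (cases u) auto
  have "take n (rotate1 (u @ [b])) = v" using rot1 v u assms(2) by simp
  moreover have "take n (rotate 2 (u @ [b])) \<in> V"
    using take_rotate_in_scc[OF assms(1) x assms(2)] u by simp
  moreover have "garc F n (take n (rotate1 (u @ [b]))) (take n (rotate 2 (u @ [b])))"
    using garc_take_rotate1[OF W_rotate[OF x, of 1] assms(2)] by (simp add: numeral_2_eq_2)
  moreover have "take n (rotate 2 (u @ [b])) = tl v @ [hd u]"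
    using rot1 v u assms(2) by (cases u; cases "tl u") (auto simp: numeral_2_eq_2)
  ultimately have "Garc F n V v (tl v @ [hd u])"
    using \<open>v \<in> V\<close> unfolding Garc_def by simp
  then show ?thesis unfolding gamma_def by (simp add: Max_ge)
qed

lemma shift_register_window:
  assumes "\<And>i. c (Suc i) = tl (c i) @ [l (Suc i)]" "length (c i) = n"
  shows "c (i + n) = map (\<lambda>j. l (i + 1 + j)) [0..<n]"
proof -
  have "c (i + m) = drop m (c i) @ map (\<lambda>j. l (i + 1 + j)) [0..<m]" if "m \<le> n" for m
    using that
  proof (induction m)
    case (Suc m)
    then have "drop m (c i) \<noteq> []" using assms(2) by simp
    with Suc show ?case
      using assms(1)[of "i + m"] by (simp add: drop_Suc tl_drop)
  qed simp
  from this[of n] show ?thesis using assms(2) by simp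
qed

lemma periodic_add_mult:
  fixes f :: "nat \<Rightarrow> 'a"
  assumes "\<And>i. f (i + k) = f i"
  shows "f (i + m * k) = f i"
proof (induction m)
  case (Suc m)
  then show ?case using assms[of "i + m * k"] by (simp add: algebra_simps)
qed simp

lemma periodic_shift_invariant:
  fixes f :: "nat \<Rightarrow> 'a"
  assumes "k > 0" "\<And>i. f (i + k) = f i" "\<And>i. f (i + m + p) = f (i + m)"
  shows "f (i + p) = f i"
proof -
  define j where "j = i + m * k - m"
  have "m \<le> m * k" using assms(1) by simp
  then have j: "j + m = i + m * k" unfolding j_def by linarith
  have "f (i + p) = f (i + p + m * k)" using periodic_add_mult[of f k, OF assms(2)] by simp
  also have "i + p + m * k = j + m + p" using j by simp
  also have "f \<dots> = f (j + m)" by (rule assms(3))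
  also have "\<dots> = f i" unfolding j by (rule periodic_add_mult[of f k, OF assms(2)])
  finally show ?thesis .
qed

lemma periodic_monotone_shift_eq:
  fixes f :: "nat \<Rightarrow> 'a::linorder"
  assumes "k > 0" "\<And>i. f (i + k) = f i" "\<And>i. f i \<le> f (i + p)"
  shows "f (i + p) = f i"
proof (rule antisym)
  have mono: "f i \<le> f (i + m * p)" for i m
  proof (induction m)
    case (Suc m)
    have "f (i + m * p) \<le> f (i + Suc m * p)"
      using assms(3)[of "i + m * p"] by (simp add: algebra_simps)
    with Suc show ?case by (rule order_trans)
  qed simp
  have "f (i + p) \<le> f (i + p + (k - 1) * p)" by (rule mono)
  also have "i + p + (k - 1) * p = i + p * k"
    using assms(1) by (cases k) (simp_all add: algebra_simps)
  also have "f \<dots> = f i"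
    using periodic_add_mult[of f k i p, OF assms(2)] by (simp add: mult.commute)
  finally show "f (i + p) \<le> f i" .
qed (rule assms(3))

lemma map_upt_periodic:
  assumes "\<And>j. f (j + k) = f j"
  shows "map f [0..<q * k] = concat (replicate q (map f [0..<k]))"
proof (induction q)
  case (Suc q)
  have "[0..<Suc q * k] = [0..<k] @ [k..<q * k + k]"
    using upt_add_eq_append[of 0 k "q * k"] by (simp add: add.commute)
  also have "[k..<q * k + k] = map (\<lambda>j. j + k) [0..<q * k]"
    by (rule map_add_upt[symmetric])
  finally have "map f [0..<Suc q * k] = map f [0..<k] @ map f [0..<q * k]"
    using assms by simp
  with Suc show ?case by simp
qed simp

lemma is_cycle_arc_mod:
  assumes "is_cycle R cs"
  shows "R (cs ! (i mod length cs)) (cs ! (Suc i mod length cs))"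
proof -
  have "cs \<noteq> []" using assms unfolding is_cycle_def by simp
  then have "R (cs ! (i mod length cs)) (cs ! ((i mod length cs + 1) mod length cs))"
    using assms unfolding is_cycle_def by simp
  then show ?thesis by (simp add: mod_Suc_eq)
qed

locale T_closed_walk =
  fixes F :: "('a::{finite,linorder}) list set" and n :: nat and V :: "'a list set"
    and c :: "nat \<Rightarrow> 'a list" and k :: nat
  assumes n_ge_1: "n \<ge> 1" and scc: "is_scc F n V" and k_pos: "k > 0"
    and c_periodic: "c (i + k) = c i"
    and T_arc: "Tarc F n V (c i) (c (Suc i))"
begin

lemma length_c: "length (c i) = n"
  using T_arc[of i] unfolding Tarc_def Garc_def garc_def by simp

lemma c_Suc: "c (Suc i) = tl (c i) @ [last (c (Suc i))]"
  using T_arc[of i] unfolding Tarc_def Garc_def garc_def by auto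

lemma gamma_c: "gamma F n V (c i) = last (c (Suc i))"
  using T_arc[of i] unfolding Tarc_def by simp

lemma c_add_n: "c (i + n) = map (\<lambda>j. last (c (i + 1 + j))) [0..<n]"
  by (rule shift_register_window[of c "\<lambda>i. last (c i)", OF c_Suc length_c])

lemma last_c_le_shift: "last (c s) \<le> last (c (s + (n + 1)))"
proof -
  obtain t where t: "s + k = Suc t" using k_pos by (metis add_gr_0 gr0_implies_Suc)
  have "last (c (Suc t)) = hd (c (t + n))" using c_add_n[of t] n_ge_1 by (simp add: hd_map)
  also have "\<dots> \<le> gamma F n V (c (Suc (t + n)))"
    using hd_le_gamma[OF scc n_ge_1] T_arc unfolding Tarc_def by blast
  also have "\<dots> = last (c (Suc (Suc (t + n))))" by (rule gamma_c)
  also have "Suc (Suc (t + n)) = s + (n + 1) + k" using t by simp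
  finally show ?thesis using t c_periodic[of s] c_periodic[of "s + (n + 1)"] by simp
qed

lemma last_c_periodic: "last (c (s + (n + 1))) = last (c s)"
  by (rule periodic_monotone_shift_eq[of k "\<lambda>i. last (c i)" "n + 1", OF k_pos _ last_c_le_shift])
    (simp add: c_periodic)

lemma c_periodic_Suc_n: "c (i + (n + 1)) = c i"
proof (rule periodic_shift_invariant[of k c n, OF k_pos c_periodic])
  fix i
  have "c (i + n + (n + 1)) = c (i + (n + 1) + n)" by (simp add: algebra_simps)
  also have "\<dots> = map (\<lambda>j. last (c (i + 1 + j + (n + 1)))) [0..<n]"
    using c_add_n[of "i + (n + 1)"] by (simp add: algebra_simps)
  also have "\<dots> = map (\<lambda>j. last (c (i + 1 + j))) [0..<n]" by (simp only: last_c_periodic)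
  also have "\<dots> = c (i + n)" by (rule c_add_n[symmetric])
  finally show "c (i + n + (n + 1)) = c (i + n)" .
qed

lemma c_append_gamma: "c i @ [gamma F n V (c i)] = map (\<lambda>j. last (c (i + 2 + j))) [0..<n + 1]"
proof -
  have "c i = c (i + 1 + n)" using c_periodic_Suc_n[of i] by (simp add: algebra_simps)
  also have "\<dots> = map (\<lambda>j. last (c (i + 2 + j))) [0..<n]" using c_add_n[of "i + 1"] by simp
  finally have "c i = map (\<lambda>j. last (c (i + 2 + j))) [0..<n]" .
  moreover have "gamma F n V (c i) = last (c (i + 2 + n))"
    using gamma_c[of i] last_c_periodic[of "Suc i"] by (simp add: algebra_simps)
  ultimately show ?thesis by simp
qed

end

theorem corollary1:
  fixes F :: "('a::{finite,linorder}) list set" and n :: nat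
    and V :: "'a list set" and cs :: "'a list list"
  assumes "n \<ge> 1"
    and "is_deBruijn F n V"
    and "is_cycle (Tarc F n V) cs"
  shows "length cs dvd n + 1 \<and>
    (\<forall>i<length cs.
       (cs ! i) @ [gamma F n V (cs ! i)] =
       concat (replicate ((n + 1) div length cs)
         (map (\<lambda>j. last (cs ! ((i + 2 + j) mod length cs))) [0..<length cs])))"
proof -
  define k where "k = length cs"
  have k_pos: "k > 0" and "distinct cs" using assms(3) unfolding is_cycle_def k_def by auto
  interpret T_closed_walk F n V "\<lambda>i. cs ! (i mod k)" k
    using assms is_cycle_arc_mod[OF assms(3)] k_pos
    by unfold_locales (auto simp: is_deBruijn_def k_def)
  have "cs ! ((n + 1) mod k) = cs ! 0" using c_periodic_Suc_n[of 0] by simp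
  then have dvd: "k dvd n + 1"
    using \<open>distinct cs\<close> k_pos by (simp add: k_def nth_eq_iff_index_eq mod_eq_0_iff_dvd)
  have "cs ! i @ [gamma F n V (cs ! i)] =
      concat (replicate ((n + 1) div k) (map (\<lambda>j. last (cs ! ((i + 2 + j) mod k))) [0..<k]))"
    if "i < k" for i
  proof -
    have "(n + 1) div k * k = n + 1" using dvd by simp
    then have "cs ! i @ [gamma F n V (cs ! i)] =
        map (\<lambda>j. last (cs ! ((i + 2 + j) mod k))) [0..<(n + 1) div k * k]"
      using c_append_gamma[of i] unfolding mod_less[OF that] by (simp only:)
    also have "\<dots> = concat (replicate ((n + 1) div k)
        (map (\<lambda>j. last (cs ! ((i + 2 + j) mod k))) [0..<k]))"
      by (rule map_upt_periodic) (simp only: add.assoc[symmetric] mod_add_self2)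
    finally show ?thesis .
  qed
  with dvd show ?thesis unfolding k_def by blast
qed

end
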